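(* Let $G$ be a simple cubic graph and $(G',r)$ be constructed from $G$ as described in the context. Then there exists a minimum-size vector connectivity set $S$ for $(G',r)$ that contains no vertex of the form $w_{x,e}$ or $w_e$ (for $e\in E(G)$, $x$ an endpoint of $e$).
   Context: Construction of $G'$ from a cubic graph $G$: start with $G$. (1) For each edge $e=xy$ of $G$, delete $xy$, add three new vertices $w_{x,e},w_e,w_{y,e}$ and the edges $xw_{x,e}, w_{x,e}w_e, w_ew_{y,e}, w_{y,e}y$. (2) For each edge $e=xy$ of $G$, add two new vertices $z_{x,e},z_{y,e}$ and the edges $w_{x,e}z_{x,e}, z_{x,e}w_e, w_ez_{y,e}, z_{y,e}w_{y,e}$. (3) For every vertex $x$ of $G$ with incident edges $e,f,g$, add the edges $w_{x,e}w_{x,f}, w_{x,e}w_{x,g}, w_{x,f}w_{x,g}$. Requirements: for every edge $e=xy$ of $G$, $r(w_{x,e})=r(w_{y,e})=4$ and $r(w_e)=3$; $r(v')=0$ for all other vertices of $G'$. For $S\subseteq V(G')$ and $v\in V(G')\setminus S$, a $v$--$S$ fan of order $k$ is a collection of $k$ paths, each connecting $v$ to a vertex of $S$, pairwise vertex-disjoint except at $v$; $v$ is $k$-linked to $S$ if such a fan exists. A vector connectivity set for $(G',r)$ is a set $S$ such that every $v\in V(G')\setminus S$ is $r(v)$-linked to $S$. *)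

theory Defs
  imports Main
begin

definition simple_graph :: "'v set \<Rightarrow> ('v \<Rightarrow> 'v \<Rightarrow> bool) \<Rightarrow> bool" where
  "simple_graph V E \<longleftrightarrow> finite V \<and> (\<forall>x y. E x y \<longrightarrow> x \<in> V \<and> y \<in> V)
     \<and> (\<forall>x y. E x y \<longrightarrow> E y x) \<and> (\<forall>x. \<not> E x x)"

definition cubic_graph :: "'v set \<Rightarrow> ('v \<Rightarrow> 'v \<Rightarrow> bool) \<Rightarrow> bool" where
  "cubic_graph V E \<longleftrightarrow> simple_graph V E \<and> (\<forall>x\<in>V. card {y. E x y} = 3)"

definition graph_edges :: "('v \<Rightarrow> 'v \<Rightarrow> bool) \<Rightarrow> 'v set set" where
  "graph_edges E = {{x, y} | x y. E x y}"

definition is_path :: "'v set \<Rightarrow> ('v \<Rightarrow> 'v \<Rightarrow> bool) \<Rightarrow> 'v list \<Rightarrow> bool" where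
  "is_path Vs Adj p \<longleftrightarrow> p \<noteq> [] \<and> set p \<subseteq> Vs \<and> distinct p \<and>
     (\<forall>i. Suc i < length p \<longrightarrow> Adj (p ! i) (p ! Suc i))"

definition is_fan :: "'v set \<Rightarrow> ('v \<Rightarrow> 'v \<Rightarrow> bool) \<Rightarrow> 'v \<Rightarrow> 'v set \<Rightarrow> nat \<Rightarrow> 'v list list \<Rightarrow> bool" where
  "is_fan Vs Adj v S k ps \<longleftrightarrow> length ps = k \<and>
     (\<forall>p\<in>set ps. is_path Vs Adj p \<and> hd p = v \<and> last p \<in> S) \<and>
     (\<forall>i<k. \<forall>j<k. i \<noteq> j \<longrightarrow> set (ps ! i) \<inter> set (ps ! j) = {v})"

definition k_linked :: "'v set \<Rightarrow> ('v \<Rightarrow> 'v \<Rightarrow> bool) \<Rightarrow> nat \<Rightarrow> 'v \<Rightarrow> 'v set \<Rightarrow> bool" where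
  "k_linked Vs Adj k v S \<longleftrightarrow> (\<exists>ps. is_fan Vs Adj v S k ps)"

definition vector_connectivity_set ::
  "'v set \<Rightarrow> ('v \<Rightarrow> 'v \<Rightarrow> bool) \<Rightarrow> ('v \<Rightarrow> nat) \<Rightarrow> 'v set \<Rightarrow> bool" where
  "vector_connectivity_set Vs Adj r S \<longleftrightarrow> S \<subseteq> Vs \<and>
     (\<forall>v\<in>Vs - S. k_linked Vs Adj (r v) v S)"

text \<open>Orig x = x; WX x e = w_{x,e}; WE e = w_e; Z x e = z_{x,e}.\<close>
datatype 'a gvert = Orig 'a | WX 'a "'a set" | WE "'a set" | Z 'a "'a set"

definition Gp_verts :: "'a set \<Rightarrow> ('a \<Rightarrow> 'a \<Rightarrow> bool) \<Rightarrow> 'a gvert set" where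
  "Gp_verts V E = Orig ` V
     \<union> {WX x e | x e. e \<in> graph_edges E \<and> x \<in> e}
     \<union> WE ` graph_edges E
     \<union> {Z x e | x e. e \<in> graph_edges E \<and> x \<in> e}"

definition Gp_adj0 :: "('a \<Rightarrow> 'a \<Rightarrow> bool) \<Rightarrow> 'a gvert \<Rightarrow> 'a gvert \<Rightarrow> bool" where
  "Gp_adj0 E u w \<longleftrightarrow>
     (\<exists>x e. e \<in> graph_edges E \<and> x \<in> e \<and>
        ((u = Orig x \<and> w = WX x e) \<or> (u = WX x e \<and> w = WE e) \<or>
         (u = WX x e \<and> w = Z x e) \<or> (u = Z x e \<and> w = WE e)))
   \<or> (\<exists>x e f. e \<in> graph_edges E \<and> f \<in> graph_edges E \<and> x \<in> e \<and> x \<in> f \<and> e \<noteq> f \<and>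
        u = WX x e \<and> w = WX x f)"

definition Gp_adj :: "('a \<Rightarrow> 'a \<Rightarrow> bool) \<Rightarrow> 'a gvert \<Rightarrow> 'a gvert \<Rightarrow> bool" where
  "Gp_adj E u w \<longleftrightarrow> Gp_adj0 E u w \<or> Gp_adj0 E w u"

fun Gp_r :: "'a gvert \<Rightarrow> nat" where
  "Gp_r (WX x e) = 4"
| "Gp_r (WE e) = 3"
| "Gp_r _ = 0"

end

theory Submission
  imports Defs
begin

text \<open>
  Every vector connectivity set T of G' satisfies two local conditions. Three disjoint paths
  from w_e avoiding T must leave through w_{x,e}, w_{y,e} or a z-vertex of e, so T contains
  w_e or a z-vertex of e. Four disjoint paths from w_{x,e} have only w_e and the two other
  w_{x,f} as exits once x and z_{x,e} are not in T, so if x is not in T then T contains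
  w_{x,e} or z_{x,e}.

  Conversely, a set S of original vertices and z-vertices is a vector connectivity set as soon
  as every w_{x,e} has x or z_{x,e} in S and every edge has one of its z-vertices in S: the
  required fans can then be written down inside the gadgets. Keeping the original vertices of a
  minimum T and choosing z_{x,e} for every endpoint x not in T, plus one z-vertex of e when both
  endpoints are in T, yields such a set, and the two local conditions give an injection of it
  into T.
\<close>

lemma is_path_singleton [simp]: "is_path Vs Adj [u] \<longleftrightarrow> u \<in> Vs"
  by (simp add: is_path_def)

lemma is_path_Cons:
  assumes "p \<noteq> []"
  shows "is_path Vs Adj (u # p) \<longleftrightarrow> u \<in> Vs \<and> u \<notin> set p \<and> Adj u (hd p) \<and> is_path Vs Adj p"
  using assms by (auto simp: is_path_def nth_Cons hd_conv_nth split: nat.splits)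

lemma path_from_outside_meets_separator:
  assumes p: "is_path Vs Adj p" "hd p = v" "last p \<in> S" and "v \<notin> S"
    and sep: "\<And>u. Adj v u \<Longrightarrow> u \<in> C \<or> (u \<notin> S \<and> (\<forall>w. Adj u w \<longrightarrow> w = v \<or> w \<in> C))"
  shows "set p \<inter> C \<noteq> {}"
proof -
  obtain p' where "p = v # p'" using p(1,2) by (cases p) (auto simp: is_path_def)
  moreover from this have "p' \<noteq> []" using p(3) \<open>v \<notin> S\<close> by auto
  ultimately obtain u q where p_eq: "p = v # u # q" by (cases p') auto
  have "Adj v u" "is_path Vs Adj (u # q)"
    using p(1) by (simp_all add: p_eq is_path_Cons)
  show ?thesis
  proof (cases "u \<in> C")
    case False
    with sep[OF \<open>Adj v u\<close>] have "u \<notin> S" and u_nbrs: "\<forall>w. Adj u w \<longrightarrow> w = v \<or> w \<in> C" by auto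
    then obtain w q' where "q = w # q'" using p(3) by (cases q) (auto simp: p_eq)
    with p(1) have "Adj u w" "w \<noteq> v" by (auto simp: p_eq is_path_Cons)
    with u_nbrs show ?thesis by (auto simp: p_eq \<open>q = w # q'\<close>)
  qed (simp add: p_eq)
qed

lemma fan_length_le_card_hitting_set:
  assumes fan: "is_fan Vs Adj v S k ps" and "finite C" "v \<notin> C"
    and hit: "\<forall>p\<in>set ps. set p \<inter> C \<noteq> {}"
  shows "k \<le> card C"
proof -
  have len: "length ps = k" using fan by (simp add: is_fan_def)
  have "\<forall>i<k. \<exists>c. c \<in> set (ps ! i) \<inter> C"
    using hit len nth_mem by blast
  then obtain h where h: "\<forall>i<k. h i \<in> set (ps ! i) \<inter> C" by metis
  have "inj_on h {..<k}"
  proof (rule inj_onI)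
    fix i j assume ij: "i \<in> {..<k}" "j \<in> {..<k}" "h i = h j"
    show "i = j"
    proof (rule ccontr)
      assume "i \<noteq> j"
      with fan ij have "set (ps ! i) \<inter> set (ps ! j) = {v}" by (simp add: is_fan_def)
      moreover have "h i \<in> set (ps ! i) \<inter> set (ps ! j) \<inter> C" using h ij by auto
      ultimately show False using \<open>v \<notin> C\<close> by auto
    qed
  qed
  moreover have "h ` {..<k} \<subseteq> C" using h by auto
  ultimately show ?thesis using card_inj_on_le[OF _ _ \<open>finite C\<close>] by fastforce
qed

lemma k_linked_le_card_separator:
  assumes "k_linked Vs Adj k v S" "finite C" "v \<notin> C" "v \<notin> S"
    and "\<And>u. Adj v u \<Longrightarrow> u \<in> C \<or> (u \<notin> S \<and> (\<forall>w. Adj u w \<longrightarrow> w = v \<or> w \<in> C))"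
  shows "k \<le> card C"
proof -
  obtain ps where fan: "is_fan Vs Adj v S k ps" using assms(1) by (auto simp: k_linked_def)
  then have "\<forall>p\<in>set ps. set p \<inter> C \<noteq> {}"
    using path_from_outside_meets_separator[OF _ _ _ assms(4,5)] by (auto simp: is_fan_def)
  with fan assms(2,3) show ?thesis by (rule fan_length_le_card_hitting_set)
qed

lemma k_linked_of_paths:
  assumes "\<forall>p\<in>set ps. is_path Vs Adj p \<and> hd p = v \<and> last p \<in> S"
    and "sorted_wrt (\<lambda>p q. set p \<inter> set q = {v}) ps"
  shows "k_linked Vs Adj (length ps) v S"
proof -
  have "set (ps ! i) \<inter> set (ps ! j) = {v}" if "i < length ps" "j < length ps" "i \<noteq> j" for i j
  proof (cases "i < j")
    case True
    then show ?thesis using assms(2) that(2) by (simp add: sorted_wrt_iff_nth_less)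
  next
    case False
    then have "j < i" using that(3) by simp
    then have "set (ps ! j) \<inter> set (ps ! i) = {v}"
      using assms(2) that(1) by (simp add: sorted_wrt_iff_nth_less)
    then show ?thesis by (simp add: Int_commute)
  qed
  with assms(1) show ?thesis unfolding k_linked_def is_fan_def by blast
qed

lemma k_linked_0 [simp]: "k_linked Vs Adj 0 v S"
  by (simp add: k_linked_def is_fan_def)

lemma Gp_adjI:
  assumes "e \<in> graph_edges E" "x \<in> e"
  shows "Gp_adj E (Orig x) (WX x e)" "Gp_adj E (WX x e) (Orig x)"
    "Gp_adj E (WX x e) (WE e)" "Gp_adj E (WE e) (WX x e)"
    "Gp_adj E (WX x e) (Z x e)" "Gp_adj E (Z x e) (WX x e)"
    "Gp_adj E (Z x e) (WE e)" "Gp_adj E (WE e) (Z x e)"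
  using assms by (auto simp: Gp_adj_def Gp_adj0_def)

lemma Gp_adj_WX_WX:
  "e \<in> graph_edges E \<Longrightarrow> f \<in> graph_edges E \<Longrightarrow> x \<in> e \<Longrightarrow> x \<in> f \<Longrightarrow> e \<noteq> f
    \<Longrightarrow> Gp_adj E (WX x e) (WX x f)"
  by (auto simp: Gp_adj_def Gp_adj0_def)

lemma Gp_adj_OrigD: "Gp_adj E (Orig x) w \<Longrightarrow> \<exists>f. w = WX x f \<and> f \<in> graph_edges E \<and> x \<in> f"
  by (auto simp: Gp_adj_def Gp_adj0_def)

lemma Gp_adj_WXD:
  "Gp_adj E (WX x e) w \<Longrightarrow>
    w = Orig x \<or> w = WE e \<or> w = Z x e \<or> (\<exists>f. w = WX x f \<and> f \<in> graph_edges E \<and> x \<in> f \<and> f \<noteq> e)"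
  by (auto simp: Gp_adj_def Gp_adj0_def)

lemma Gp_adj_WED: "Gp_adj E (WE e) w \<Longrightarrow> \<exists>x\<in>e. w = WX x e \<or> w = Z x e"
  by (auto simp: Gp_adj_def Gp_adj0_def)

lemma Gp_adj_ZD: "Gp_adj E (Z x e) w \<Longrightarrow> w = WX x e \<or> w = WE e"
  by (auto simp: Gp_adj_def Gp_adj0_def)

fun gadget_edge :: "'a gvert \<Rightarrow> 'a set option" where
  "gadget_edge (Orig _) = None"
| "gadget_edge (WX _ e) = Some e"
| "gadget_edge (WE e) = Some e"
| "gadget_edge (Z _ e) = Some e"

fun base_vertex :: "'a gvert \<Rightarrow> 'a option" where
  "base_vertex (Orig x) = Some x"
| "base_vertex (WX x _) = Some x"
| "base_vertex (WE _) = None"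
| "base_vertex (Z x _) = Some x"

locale cubic =
  fixes V :: "'a set" and E :: "'a \<Rightarrow> 'a \<Rightarrow> bool"
  assumes cubic: "cubic_graph V E"
begin

abbreviation is_vcs :: "'a gvert set \<Rightarrow> bool" where
  "is_vcs S \<equiv> vector_connectivity_set (Gp_verts V E) (Gp_adj E) Gp_r S"

lemma finite_V: "finite V"
  and edge_in_V: "E x y \<Longrightarrow> x \<in> V \<and> y \<in> V"
  and edge_sym: "E x y \<Longrightarrow> E y x"
  and edge_irrefl: "\<not> E x x"
  and degree_3: "x \<in> V \<Longrightarrow> card {y. E x y} = 3"
  using cubic unfolding cubic_graph_def simple_graph_def by blast+

lemma graph_edgesE:
  assumes "e \<in> graph_edges E" "x \<in> e"
  obtains y where "e = {x, y}" "E x y" "x \<noteq> y"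
proof -
  obtain u w where "e = {u, w}" "E u w" using assms(1) unfolding graph_edges_def by blast
  moreover from this have "u \<noteq> w" using edge_irrefl by blast
  moreover from assms(2) \<open>e = {u, w}\<close> consider "x = u" | "x = w" by blast
  ultimately show ?thesis using that edge_sym by cases (auto simp: insert_commute)
qed

lemma graph_edgesI: "E x y \<Longrightarrow> {x, y} \<in> graph_edges E"
  unfolding graph_edges_def by blast

lemma graph_edges_subset_V: "e \<in> graph_edges E \<Longrightarrow> x \<in> e \<Longrightarrow> x \<in> V"
  by (metis graph_edgesE edge_in_V)

lemma finite_graph_edges: "finite (graph_edges E)"
  by (rule finite_subset[of _ "Pow V"]) (auto simp: graph_edges_subset_V finite_V)

lemma Gp_verts_memI [simp]:
  "x \<in> V \<Longrightarrow> Orig x \<in> Gp_verts V E"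
  "e \<in> graph_edges E \<Longrightarrow> x \<in> e \<Longrightarrow> WX x e \<in> Gp_verts V E"
  "e \<in> graph_edges E \<Longrightarrow> WE e \<in> Gp_verts V E"
  "e \<in> graph_edges E \<Longrightarrow> x \<in> e \<Longrightarrow> Z x e \<in> Gp_verts V E"
  unfolding Gp_verts_def by blast+

lemma finite_Gp_verts: "finite (Gp_verts V E)"
proof -
  have "Gp_verts V E \<subseteq> Orig ` V \<union> (\<lambda>(x, e). WX x e) ` (V \<times> graph_edges E) \<union> WE ` graph_edges E
     \<union> (\<lambda>(x, e). Z x e) ` (V \<times> graph_edges E)"
    unfolding Gp_verts_def using graph_edges_subset_V by fastforce
  then show ?thesis using finite_V finite_graph_edges by (auto intro: finite_subset)
qed

lemma card_incident_edges:
  assumes "x \<in> V"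
  shows "card {f \<in> graph_edges E. x \<in> f} = 3"
proof -
  have "{f \<in> graph_edges E. x \<in> f} = (\<lambda>y. {x, y}) ` {y. E x y}"
    by (auto intro: graph_edgesI elim: graph_edgesE)
  moreover have "inj_on (\<lambda>y. {x, y}) {y. E x y}"
    using edge_irrefl by (auto simp: inj_on_def doubleton_eq_iff)
  ultimately show ?thesis using degree_3[OF assms] by (simp add: card_image)
qed

lemma card_other_incident_edges:
  assumes "e \<in> graph_edges E" "x \<in> e"
  shows "card {f \<in> graph_edges E. x \<in> f \<and> f \<noteq> e} = 2"
proof -
  have "{f \<in> graph_edges E. x \<in> f \<and> f \<noteq> e} = {f \<in> graph_edges E. x \<in> f} - {e}" by blast
  then show ?thesis
    using assms card_incident_edges[OF graph_edges_subset_V[OF assms]] finite_graph_edges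
    by (simp add: card_Diff_singleton)
qed

lemma vcs_Z_or_WE:
  assumes "is_vcs T" "e \<in> graph_edges E" "e = {x, y}" "WE e \<notin> T"
  shows "Z x e \<in> T \<or> Z y e \<in> T"
proof (rule ccontr)
  assume no_Z: "\<not> (Z x e \<in> T \<or> Z y e \<in> T)"
  have "WE e \<in> Gp_verts V E - T" using assms(2,4) by simp
  then have "k_linked (Gp_verts V E) (Gp_adj E) (Gp_r (WE e)) (WE e) T"
    using assms(1) unfolding vector_connectivity_set_def by blast
  then have "k_linked (Gp_verts V E) (Gp_adj E) 3 (WE e) T" by simp
  then have "3 \<le> card {WX x e, WX y e}"
    by (rule k_linked_le_card_separator) (use assms(3,4) no_Z in \<open>auto dest!: Gp_adj_WED Gp_adj_ZD\<close>)
  moreover have "card {WX x e, WX y e} \<le> 2" by (cases "x = y") auto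
  ultimately show False by simp
qed

lemma vcs_WX_or_Z:
  assumes "is_vcs T" "e \<in> graph_edges E" "x \<in> e" "Orig x \<notin> T"
  shows "WX x e \<in> T \<or> Z x e \<in> T"
proof (rule ccontr)
  assume not_T: "\<not> (WX x e \<in> T \<or> Z x e \<in> T)"
  let ?F = "{f \<in> graph_edges E. x \<in> f \<and> f \<noteq> e}"
  have "WX x e \<in> Gp_verts V E - T" using assms(2,3) not_T by simp
  then have "k_linked (Gp_verts V E) (Gp_adj E) (Gp_r (WX x e)) (WX x e) T"
    using assms(1) unfolding vector_connectivity_set_def by blast
  then have "k_linked (Gp_verts V E) (Gp_adj E) 4 (WX x e) T" by simp
  then have "4 \<le> card (insert (WE e) (WX x ` ?F))"
    by (rule k_linked_le_card_separator)
      (use finite_graph_edges assms(4) not_T in \<open>auto dest!: Gp_adj_WXD Gp_adj_OrigD Gp_adj_ZD\<close>)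
  moreover have "card (insert (WE e) (WX x ` ?F)) \<le> 3"
    using card_image_le[of ?F "WX x"] card_other_incident_edges[OF assms(2,3)] finite_graph_edges
    by (simp add: card_insert_if)
  ultimately show False by simp
qed

context
  fixes S :: "'a gvert set"
  assumes S_subset: "S \<subseteq> Gp_verts V E"
    and Orig_or_Z: "\<And>e x. e \<in> graph_edges E \<Longrightarrow> x \<in> e \<Longrightarrow> Orig x \<in> S \<or> Z x e \<in> S"
    and Z_of_edge: "\<And>e x y. e \<in> graph_edges E \<Longrightarrow> e = {x, y} \<Longrightarrow> Z x e \<in> S \<or> Z y e \<in> S"
begin

lemma WX_path_to_S:
  assumes "e \<in> graph_edges E" "x \<in> e"
  obtains p where "is_path (Gp_verts V E) (Gp_adj E) p" "hd p = WX x e" "last p \<in> S"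
    "\<forall>t\<in>set p. gadget_edge t = Some e"
proof -
  obtain y where y: "e = {x, y}" "y \<in> e" using assms graph_edgesE by blast
  show ?thesis
  proof (cases "Z x e \<in> S")
    case True
    then show ?thesis using that[of "[WX x e, Z x e]"] by (simp add: is_path_Cons Gp_adjI assms)
  next
    case False
    then have "Z y e \<in> S" using Z_of_edge assms(1) y(1) by blast
    then show ?thesis using that[of "[WX x e, WE e, Z y e]"] by (simp add: is_path_Cons Gp_adjI assms y(2))
  qed
qed

lemma WX_two_paths_to_S:
  assumes e: "e \<in> graph_edges E" "x \<in> e"
  obtains p q where "is_path (Gp_verts V E) (Gp_adj E) p" "hd p = WX x e" "last p \<in> S"
    "is_path (Gp_verts V E) (Gp_adj E) q" "hd q = WX x e" "last q \<in> S"
    "set p \<inter> set q = {WX x e}"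
    "\<forall>t\<in>set p \<union> set q. gadget_edge t = Some e \<or> gadget_edge t = None"
proof -
  obtain y where y: "e = {x, y}" "x \<noteq> y" "y \<in> e" using e graph_edgesE by blast
  have V: "x \<in> V" "y \<in> V" using e y(3) graph_edges_subset_V by auto
  let ?to_Orig_x = "[WX x e, Orig x]" and ?to_Z_x = "[WX x e, Z x e]"
    and ?to_Z_y = "[WX x e, WE e, Z y e]" and ?to_Orig_y = "[WX x e, WE e, WX y e, Orig y]"
  have paths: "is_path (Gp_verts V E) (Gp_adj E) ?to_Orig_x" "is_path (Gp_verts V E) (Gp_adj E) ?to_Z_x"
    "is_path (Gp_verts V E) (Gp_adj E) ?to_Z_y" "is_path (Gp_verts V E) (Gp_adj E) ?to_Orig_y"
    using e y V by (simp_all add: is_path_Cons Gp_adjI)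
  consider "Orig x \<in> S" "Z x e \<in> S" | "Orig x \<in> S" "Z y e \<in> S" | "Z x e \<in> S" "Z y e \<in> S"
    | "Z x e \<in> S" "Orig y \<in> S"
    using Orig_or_Z[OF e] Orig_or_Z[OF e(1) y(3)] Z_of_edge[OF e(1) y(1)] by blast
  then show ?thesis
  proof cases
    case 1 then show ?thesis using that[OF paths(1) _ _ paths(2)] by auto
  next
    case 2 then show ?thesis using that[OF paths(1) _ _ paths(3)] by auto
  next
    case 3 then show ?thesis using that[OF paths(2) _ _ paths(3)] y(2) by auto
  next
    case 4 then show ?thesis using that[OF paths(2) _ _ paths(4)] y(2) by auto
  qed
qed

lemma WX_k_linked:
  assumes e: "e \<in> graph_edges E" "x \<in> e"
  shows "k_linked (Gp_verts V E) (Gp_adj E) 4 (WX x e) S"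
proof -
  obtain p q where p: "is_path (Gp_verts V E) (Gp_adj E) p" "hd p = WX x e" "last p \<in> S"
    and q: "is_path (Gp_verts V E) (Gp_adj E) q" "hd q = WX x e" "last q \<in> S"
    and pq: "set p \<inter> set q = {WX x e}"
    and pq_in_e: "\<forall>t\<in>set p \<union> set q. gadget_edge t = Some e \<or> gadget_edge t = None"
    using WX_two_paths_to_S[OF e] by blast
  obtain f g where fg: "{f' \<in> graph_edges E. x \<in> f' \<and> f' \<noteq> e} = {f, g}" "f \<noteq> g"
    using card_other_incident_edges[OF e] by (auto simp: card_2_iff)
  then have f: "f \<in> graph_edges E" "x \<in> f" "f \<noteq> e" and g: "g \<in> graph_edges E" "x \<in> g" "g \<noteq> e"
    by auto
  obtain pf where pf: "is_path (Gp_verts V E) (Gp_adj E) pf" "hd pf = WX x f" "last pf \<in> S"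
    "\<forall>t\<in>set pf. gadget_edge t = Some f"
    using WX_path_to_S[OF f(1,2)] by blast
  obtain pg where pg: "is_path (Gp_verts V E) (Gp_adj E) pg" "hd pg = WX x g" "last pg \<in> S"
    "\<forall>t\<in>set pg. gadget_edge t = Some g"
    using WX_path_to_S[OF g(1,2)] by blast
  have ne: "pf \<noteq> []" "pg \<noteq> []" "p \<noteq> []" "q \<noteq> []"
    using pf(1) pg(1) p(1) q(1) by (auto simp: is_path_def)
  have "Gp_adj E (WX x e) (WX x f)" "Gp_adj E (WX x e) (WX x g)"
    using Gp_adj_WX_WX e f g by metis+
  then have "is_path (Gp_verts V E) (Gp_adj E) (WX x e # pf)"
    "is_path (Gp_verts V E) (Gp_adj E) (WX x e # pg)"
    using pf pg ne f(3) g(3) e by (auto simp: is_path_Cons)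
  then have paths: "\<forall>r\<in>set [p, q, WX x e # pf, WX x e # pg]. is_path (Gp_verts V E) (Gp_adj E) r
      \<and> hd r = WX x e \<and> last r \<in> S"
    using p q pf pg ne by auto
  have "WX x e \<in> set p" "WX x e \<in> set q" using p(2) q(2) ne by (metis hd_in_set)+
  moreover have "\<forall>t\<in>set p \<union> set q. gadget_edge t \<notin> {Some f, Some g}"
    using pq_in_e f(3) g(3) by (metis empty_iff insertE option.distinct(1) option.inject)
  ultimately have "set r \<inter> set (WX x e # r') = {WX x e}"
    if "r \<in> {p, q}" "r' \<in> {pf, pg}" for r r'
    using that pf(4) pg(4) by fastforce
  moreover have "set (WX x e # pf) \<inter> set (WX x e # pg) = {WX x e}"
    using pf(4) pg(4) fg(2) by fastforce
  ultimately have "sorted_wrt (\<lambda>r r'. set r \<inter> set r' = {WX x e}) [p, q, WX x e # pf, WX x e # pg]"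
    using pq by simp
  then have "k_linked (Gp_verts V E) (Gp_adj E) (length [p, q, WX x e # pf, WX x e # pg]) (WX x e) S"
    using paths by (intro k_linked_of_paths)
  then show ?thesis by (simp add: numeral_eq_Suc)
qed

lemma WE_path_to_S_via:
  assumes e: "e \<in> graph_edges E" "x \<in> e"
  obtains p where "is_path (Gp_verts V E) (Gp_adj E) p" "hd p = WE e" "last p \<in> S"
    "\<forall>t\<in>set p. t = WE e \<or> (base_vertex t = Some x \<and> t \<noteq> Z x e)"
proof (cases "Orig x \<in> S")
  case True
  moreover have "x \<in> V" using e graph_edges_subset_V by blast
  ultimately show ?thesis using that[of "[WE e, WX x e, Orig x]"] e by (simp add: is_path_Cons Gp_adjI)
next
  case False
  obtain f where f: "f \<in> graph_edges E" "x \<in> f" "f \<noteq> e"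
    using card_other_incident_edges[OF e] by (auto simp: card_2_iff)
  with False have "Z x f \<in> S" using Orig_or_Z by blast
  moreover have "Gp_adj E (WX x e) (WX x f)" using Gp_adj_WX_WX e f by metis
  ultimately show ?thesis using that[of "[WE e, WX x e, WX x f, Z x f]"] e f
    by (simp add: is_path_Cons Gp_adjI)
qed

lemma WE_k_linked:
  assumes e: "e \<in> graph_edges E"
  shows "k_linked (Gp_verts V E) (Gp_adj E) 3 (WE e) S"
proof -
  obtain x y where xy: "e = {x, y}" "x \<noteq> y"
    using e unfolding graph_edges_def using edge_irrefl by blast
  then have "x \<in> e" "y \<in> e" by auto
  obtain u where u: "u \<in> e" "Z u e \<in> S" using Z_of_edge[OF e xy(1)] xy(1) by blast
  obtain px where px: "is_path (Gp_verts V E) (Gp_adj E) px" "hd px = WE e" "last px \<in> S"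
    "\<forall>t\<in>set px. t = WE e \<or> (base_vertex t = Some x \<and> t \<noteq> Z x e)"
    using WE_path_to_S_via[OF e \<open>x \<in> e\<close>] by blast
  obtain py where py: "is_path (Gp_verts V E) (Gp_adj E) py" "hd py = WE e" "last py \<in> S"
    "\<forall>t\<in>set py. t = WE e \<or> (base_vertex t = Some y \<and> t \<noteq> Z y e)"
    using WE_path_to_S_via[OF e \<open>y \<in> e\<close>] by blast
  have u_xy: "u = x \<or> u = y" using u(1) xy(1) by blast
  have "WE e \<in> set px" "WE e \<in> set py" using px(1,2) py(1,2) by (metis hd_in_set is_path_def)+
  moreover have "Z u e \<notin> set px \<and> Z u e \<notin> set py"
    using u_xy
  proof
    assume "u = x"
    then show ?thesis
      using px(4) py(4) xy(2) by (metis base_vertex.simps(4) gvert.distinct(12) option.inject)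
  next
    assume "u = y"
    then show ?thesis
      using px(4) py(4) xy(2) by (metis base_vertex.simps(4) gvert.distinct(12) option.inject)
  qed
  moreover have "set px \<inter> set py \<subseteq> {WE e}"
  proof
    fix t assume "t \<in> set px \<inter> set py"
    then show "t \<in> {WE e}" using px(4) py(4) xy(2) by (metis IntE option.inject singletonI)
  qed
  ultimately have "set px \<inter> set py = {WE e}" "set px \<inter> {WE e, Z u e} = {WE e}"
    "set py \<inter> {WE e, Z u e} = {WE e}"
    by blast+
  then have "sorted_wrt (\<lambda>r r'. set r \<inter> set r' = {WE e}) [px, py, [WE e, Z u e]]"
    by simp
  moreover have "\<forall>r\<in>set [px, py, [WE e, Z u e]]. is_path (Gp_verts V E) (Gp_adj E) r
      \<and> hd r = WE e \<and> last r \<in> S"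
    using px py u e by (simp add: is_path_Cons Gp_adjI)
  ultimately have "k_linked (Gp_verts V E) (Gp_adj E) (length [px, py, [WE e, Z u e]]) (WE e) S"
    by (intro k_linked_of_paths)
  then show ?thesis by (simp add: numeral_eq_Suc)
qed

lemma vcs_of_gadget_conditions: "is_vcs S"
  unfolding vector_connectivity_set_def
proof (intro conjI ballI S_subset)
  fix v assume v: "v \<in> Gp_verts V E - S"
  show "k_linked (Gp_verts V E) (Gp_adj E) (Gp_r v) v S"
    using v WX_k_linked WE_k_linked by (cases v) (auto simp: Gp_verts_def)
qed

end

definition standard_set :: "'a gvert set \<Rightarrow> 'a gvert set" where
  "standard_set T = (T \<inter> range Orig) \<union> {Z x e | x e. e \<in> graph_edges E \<and> x \<in> e \<and>
      (Orig x \<notin> T \<or> ((\<forall>u\<in>e. Orig u \<in> T) \<and> x = (SOME u. u \<in> e)))}"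

lemma Orig_mem_standard_set_iff [simp]: "Orig x \<in> standard_set T \<longleftrightarrow> Orig x \<in> T"
  by (auto simp: standard_set_def)

lemma Z_mem_standard_set_iff:
  "Z x e \<in> standard_set T \<longleftrightarrow> e \<in> graph_edges E \<and> x \<in> e \<and>
      (Orig x \<notin> T \<or> ((\<forall>u\<in>e. Orig u \<in> T) \<and> x = (SOME u. u \<in> e)))"
  by (auto simp: standard_set_def)

lemma standard_set_cases:
  assumes "v \<in> standard_set T"
  obtains x where "v = Orig x" | x e where "v = Z x e"
  using assms by (auto simp: standard_set_def)

lemma vcs_standard_set:
  assumes "T \<subseteq> Gp_verts V E"
  shows "is_vcs (standard_set T)"
proof (rule vcs_of_gadget_conditions)
  show "standard_set T \<subseteq> Gp_verts V E"
    using assms by (auto simp: standard_set_def)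
  show "Orig x \<in> standard_set T \<or> Z x e \<in> standard_set T" if "e \<in> graph_edges E" "x \<in> e" for e x
    using that by (cases "Orig x \<in> T") (simp_all add: Z_mem_standard_set_iff)
  show "Z x e \<in> standard_set T \<or> Z y e \<in> standard_set T" if e: "e \<in> graph_edges E" "e = {x, y}" for e x y
  proof -
    have "x \<in> e" "y \<in> e" using e(2) by auto
    consider "Orig x \<notin> T" | "Orig y \<notin> T" | "\<forall>u\<in>e. Orig u \<in> T"
      using e(2) by blast
    then show ?thesis
    proof cases
      case 3
      have "(SOME u. u \<in> e) \<in> e" using \<open>x \<in> e\<close> by (rule someI)
      then have "(SOME u. u \<in> e) = x \<or> (SOME u. u \<in> e) = y" using e(2) by blast
      then show ?thesis using 3 e(1) \<open>x \<in> e\<close> \<open>y \<in> e\<close> by (auto simp: Z_mem_standard_set_iff)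
    qed (use e(1) \<open>x \<in> e\<close> \<open>y \<in> e\<close> in \<open>simp_all add: Z_mem_standard_set_iff\<close>)
  qed
qed

text \<open>The side condition on x is what makes this map injective on the standard set.\<close>
definition gadget_witness :: "'a gvert set \<Rightarrow> 'a gvert \<Rightarrow> 'a gvert" where
  "gadget_witness T v = (case v of
      Z x e \<Rightarrow> SOME t. t \<in> T \<and> gadget_edge t = Some e \<and> (Orig x \<notin> T \<longrightarrow> t \<in> {WX x e, Z x e})
    | _ \<Rightarrow> v)"

lemma gadget_witness_Z:
  assumes "is_vcs T" "Z x e \<in> standard_set T"
  shows "gadget_witness T (Z x e) \<in> T" "gadget_edge (gadget_witness T (Z x e)) = Some e"
    "Orig x \<notin> T \<Longrightarrow> gadget_witness T (Z x e) \<in> {WX x e, Z x e}"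
proof -
  have e: "e \<in> graph_edges E" "x \<in> e" using assms(2) by (simp_all add: Z_mem_standard_set_iff)
  have "\<exists>t. t \<in> T \<and> gadget_edge t = Some e \<and> (Orig x \<notin> T \<longrightarrow> t \<in> {WX x e, Z x e})"
  proof (cases "Orig x \<in> T")
    case True
    obtain y where "e = {x, y}" using e graph_edgesE by blast
    then have "WE e \<in> T \<or> Z x e \<in> T \<or> Z y e \<in> T" using vcs_Z_or_WE[OF assms(1) e(1)] by blast
    with True show ?thesis by auto
  next
    case False
    then show ?thesis using vcs_WX_or_Z[OF assms(1) e] by auto
  qed
  then have "gadget_witness T (Z x e) \<in> T \<and> gadget_edge (gadget_witness T (Z x e)) = Some e
      \<and> (Orig x \<notin> T \<longrightarrow> gadget_witness T (Z x e) \<in> {WX x e, Z x e})"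
    unfolding gadget_witness_def gvert.simps by (rule someI_ex)
  then show "gadget_witness T (Z x e) \<in> T" "gadget_edge (gadget_witness T (Z x e)) = Some e"
    "Orig x \<notin> T \<Longrightarrow> gadget_witness T (Z x e) \<in> {WX x e, Z x e}"
    by blast+
qed

lemma gadget_witness_mem:
  assumes "is_vcs T" "v \<in> standard_set T"
  shows "gadget_witness T v \<in> T \<and> gadget_edge (gadget_witness T v) = gadget_edge v"
  using assms(2)
proof (cases rule: standard_set_cases)
  case (1 x)
  then show ?thesis using assms(2) by (simp add: gadget_witness_def)
next
  case (2 x e)
  then show ?thesis using gadget_witness_Z assms by simp
qed

lemma inj_on_gadget_witness:
  assumes "is_vcs T"
  shows "inj_on (gadget_witness T) (standard_set T)"
proof (rule inj_onI)
  fix v w assume v: "v \<in> standard_set T" and w: "w \<in> standard_set T"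
    and same: "gadget_witness T v = gadget_witness T w"
  then have same_edge: "gadget_edge v = gadget_edge w"
    using gadget_witness_mem[OF assms] by metis
  show "v = w"
  proof (cases rule: standard_set_cases[OF v])
    case (1 x)
    then obtain x' where "w = Orig x'" using same_edge w by (cases rule: standard_set_cases[OF w]) auto
    then show ?thesis using same 1 by (simp add: gadget_witness_def)
  next
    case (2 x e)
    then obtain x' where w_eq: "w = Z x' e" using same_edge w by (cases rule: standard_set_cases[OF w]) auto
    have v': "Z x e \<in> standard_set T" and w': "Z x' e \<in> standard_set T"
      using v w by (simp_all add: 2 w_eq)
    have "x = x'"
    proof (cases "Orig x \<in> T \<or> Orig x' \<in> T")
      case True
      have x: "x \<in> e" "Orig x \<notin> T \<or> ((\<forall>u\<in>e. Orig u \<in> T) \<and> x = (SOME u. u \<in> e))"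
        and x': "x' \<in> e" "Orig x' \<notin> T \<or> ((\<forall>u\<in>e. Orig u \<in> T) \<and> x' = (SOME u. u \<in> e))"
        using v' w' unfolding Z_mem_standard_set_iff by blast+
      with True have "\<forall>u\<in>e. Orig u \<in> T" by blast
      with x x' show ?thesis by simp
    next
      case False
      then have "gadget_witness T (Z x e) \<in> {WX x e, Z x e} \<inter> {WX x' e, Z x' e}"
        using gadget_witness_Z(3)[OF assms v'] gadget_witness_Z(3)[OF assms w'] same
        unfolding 2 w_eq by (metis IntI)
      then show ?thesis by auto
    qed
    then show ?thesis by (simp add: 2 w_eq)
  qed
qed

lemma card_standard_set_le:
  assumes "is_vcs T"
  shows "card (standard_set T) \<le> card T"
proof (rule card_inj_on_le[OF inj_on_gadget_witness[OF assms]])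
  show "gadget_witness T ` standard_set T \<subseteq> T" using gadget_witness_mem[OF assms] by blast
  show "finite T"
    using assms finite_Gp_verts by (auto simp: vector_connectivity_set_def intro: finite_subset)
qed

end

theorem mainTheorem5:
  fixes V :: "'a set" and E :: "'a \<Rightarrow> 'a \<Rightarrow> bool"
  assumes "cubic_graph V E"
  shows "\<exists>S. vector_connectivity_set (Gp_verts V E) (Gp_adj E) Gp_r S \<and>
             (\<forall>T. vector_connectivity_set (Gp_verts V E) (Gp_adj E) Gp_r T \<longrightarrow> card S \<le> card T) \<and>
             (\<forall>x e. WX x e \<notin> S) \<and> (\<forall>e. WE e \<notin> S)"
proof -
  interpret cubic V E by (rule cubic.intro) (rule assms)
  have "is_vcs (Gp_verts V E)" by (simp add: vector_connectivity_set_def)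
  then obtain T where T: "is_vcs T" and T_min: "\<And>T'. is_vcs T' \<Longrightarrow> card T \<le> card T'"
    using ex_has_least_nat[of is_vcs _ card] by metis
  have "is_vcs (standard_set T)"
    using T vcs_standard_set by (simp add: vector_connectivity_set_def)
  moreover have "card (standard_set T) \<le> card T'" if "is_vcs T'" for T'
    using card_standard_set_le[OF T] T_min[OF that] by linarith
  moreover have "WX x e \<notin> standard_set T" "WE e \<notin> standard_set T" for x e
    by (auto simp: standard_set_def)
  ultimately show ?thesis by blast
qed

end
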